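(* Let ${\cal H}$ be a finite-dimensional complex Hilbert space, let $Z$ be a positive definite operator on ${\cal H}$ with largest eigenvalue $a$ and smallest eigenvalue $b$, and let $1\le p\le 2$. Then for every subspace ${\cal E}\subset{\cal H}$, $$(Z_{\cal E})^p \ge \frac{4ab}{(a+b)^2}\,(Z^p)_{\cal E}.$$
   Context: For an operator $X$ on ${\cal H}$ and a subspace ${\cal E}$ with orthogonal projection $E$, the compression $X_{\cal E}$ is the operator $EXE$ restricted to ${\cal E}$, regarded as an operator on ${\cal E}$. The order $\ge$ is the Loewner order on Hermitian operators on ${\cal E}$. *)

theory Defs
  imports Complex_Main "Jordan_Normal_Form.Schur_Decomposition" "Jordan_Normal_Form.Char_Poly"
begin

text \<open>Operators on the n-dimensional complex Hilbert space C^n are n x n complex matrices;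
  mat_adjoint is the conjugate transpose.\<close>

definition hermitian_mat :: "complex mat \<Rightarrow> nat \<Rightarrow> bool" where
  "hermitian_mat A n \<longleftrightarrow> A \<in> carrier_mat n n \<and> mat_adjoint A = A"

definition psd_mat :: "complex mat \<Rightarrow> nat \<Rightarrow> bool" where
  "psd_mat A n \<longleftrightarrow> hermitian_mat A n \<and>
     (\<forall>v \<in> carrier_vec n. 0 \<le> Re ((A *\<^sub>v v) \<bullet>c v))"

definition posdef_mat :: "complex mat \<Rightarrow> nat \<Rightarrow> bool" where
  "posdef_mat A n \<longleftrightarrow> hermitian_mat A n \<and>
     (\<forall>v \<in> carrier_vec n. v \<noteq> 0\<^sub>v n \<longrightarrow> 0 < Re ((A *\<^sub>v v) \<bullet>c v))"

definition loewner_ge :: "complex mat \<Rightarrow> complex mat \<Rightarrow> nat \<Rightarrow> bool" where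
  "loewner_ge A B n \<longleftrightarrow> A \<in> carrier_mat n n \<and> B \<in> carrier_mat n n \<and> psd_mat (A - B) n"

definition unitary_mat :: "complex mat \<Rightarrow> nat \<Rightarrow> bool" where
  "unitary_mat U n \<longleftrightarrow> U \<in> carrier_mat n n \<and> mat_adjoint U * U = 1\<^sub>m n"

definition diag_real :: "nat \<Rightarrow> (nat \<Rightarrow> real) \<Rightarrow> complex mat" where
  "diag_real n d = mat n n (\<lambda>(i,j). if i = j then complex_of_real (d i) else 0)"

definition mat_powr :: "complex mat \<Rightarrow> real \<Rightarrow> complex mat" where
  "mat_powr A p = (SOME B. \<exists>U d. unitary_mat U (dim_row A) \<and> (\<forall>i < dim_row A. 0 \<le> d i) \<and>
      A = U * diag_real (dim_row A) d * mat_adjoint U \<and>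
      B = U * diag_real (dim_row A) (\<lambda>i. d i powr p) * mat_adjoint U)"

text \<open>A subspace E of C^n of dimension k is represented by an isometry V (n x k matrix,
  V^* V = I_k) whose range is E, i.e. whose columns are an orthonormal basis of E.
  The compression X_E (= E X E restricted to E) is then, in that basis, V^* X V.\<close>
definition isometry_mat :: "complex mat \<Rightarrow> nat \<Rightarrow> nat \<Rightarrow> bool" where
  "isometry_mat V n k \<longleftrightarrow> V \<in> carrier_mat n k \<and> mat_adjoint V * V = 1\<^sub>m k"

definition compression :: "complex mat \<Rightarrow> complex mat \<Rightarrow> complex mat" where
  "compression V X = mat_adjoint V * X * V"

end

theory Submission
  imports Defs "Jordan_Normal_Form.Spectral_Radius" "HOL-Analysis.Convex"
begin

(* Let f(t) = alpha + beta t be the chord of t^p over [b, a]; the spectra of Z and of every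
   compression X = Z_E lie in [b, a]. Convexity of t^p gives Z^p <= f(Z), and compressing,
   (Z^p)_E <= f(X). On [b, a] moreover c f(t) <= t^p with c = 4ab/(a+b)^2: writing
   p = 2 - theta, log-convexity of the moments q -> (1-s) b^q + s a^q gives
   f(t) <= t^theta Q^(1-theta) with Q = (a+b) t - ab <= t^2/c. Hence c (Z^p)_E <= c f(X) <= X^p. *)

lemma dim_mat_adjoint[simp]:
  "dim_row (mat_adjoint A) = dim_col A" "dim_col (mat_adjoint A) = dim_row A"
  unfolding mat_adjoint_def by auto

lemma index_mat_adjoint[simp]:
  "i < dim_col A \<Longrightarrow> j < dim_row A \<Longrightarrow> mat_adjoint A $$ (i,j) = cnj (A $$ (j,i))"
  unfolding mat_adjoint_def by (auto simp: mat_of_rows_def)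

lemma mat_adjoint_carrier_mat[simp]: "A \<in> carrier_mat n m \<Longrightarrow> mat_adjoint A \<in> carrier_mat m n"
  by auto

lemma mat_adjoint_adjoint[simp]: "mat_adjoint (mat_adjoint (A::complex mat)) = A"
  by (rule eq_matI, auto)

lemma mat_adjoint_mult:
  assumes "(A::complex mat) \<in> carrier_mat n m" "B \<in> carrier_mat m k"
  shows "mat_adjoint (A * B) = mat_adjoint B * mat_adjoint A"
  by (rule eq_matI, insert assms, auto simp: scalar_prod_def intro!: sum.cong)

lemma mat_adjoint_add:
  assumes "(A::complex mat) \<in> carrier_mat n m" "B \<in> carrier_mat n m"
  shows "mat_adjoint (A + B) = mat_adjoint A + mat_adjoint B"
  by (rule eq_matI, insert assms, auto)

lemma cscalar_prod_mat_adjoint: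
  assumes A: "(A::complex mat) \<in> carrier_mat n m" and v: "v \<in> carrier_vec m" and w: "w \<in> carrier_vec n"
  shows "(A *\<^sub>v v) \<bullet>c w = v \<bullet>c (mat_adjoint A *\<^sub>v w)"
proof -
  have "(A *\<^sub>v v) \<bullet>c w = (\<Sum>i<n. \<Sum>j<m. A $$ (i,j) * v $ j * cnj (w $ i))"
    using assms by (auto simp: scalar_prod_def atLeast0LessThan sum_distrib_right intro!: sum.cong)
  also have "\<dots> = (\<Sum>j<m. \<Sum>i<n. A $$ (i,j) * v $ j * cnj (w $ i))"
    by (rule sum.swap)
  also have "\<dots> = v \<bullet>c (mat_adjoint A *\<^sub>v w)"
    using assms by (auto simp: scalar_prod_def atLeast0LessThan sum_distrib_left mult_ac intro!: sum.cong)
  finally show ?thesis .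
qed

lemma cscalar_prod_self_real:
  assumes "v \<in> carrier_vec n"
  shows "v \<bullet>c v = complex_of_real (Re (v \<bullet>c v))" "0 \<le> Re (v \<bullet>c v)"
    "v \<noteq> 0\<^sub>v n \<Longrightarrow> 0 < Re (v \<bullet>c v)"
  using conjugate_square_ge_0_vec[of v] conjugate_square_greater_0_vec[OF assms]
  by (auto simp: less_eq_complex_def less_complex_def complex_eq_iff)

lemma index_mat_adjoint_mult_self:
  assumes "(W::complex mat) \<in> carrier_mat n k" "i < k" "j < k"
  shows "(mat_adjoint W * W) $$ (i,j) = col W j \<bullet>c col W i"
  using assms by (auto simp: scalar_prod_def intro!: sum.cong)

lemma unitary_matD:
  assumes "unitary_mat U n"
  shows "U \<in> carrier_mat n n" "mat_adjoint U * U = 1\<^sub>m n" "U * mat_adjoint U = 1\<^sub>m n"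
  using assms mat_mult_left_right_inverse[of "mat_adjoint U" n U] unfolding unitary_mat_def by auto

lemma unitary_mat_mult:
  assumes W: "unitary_mat W n" and U: "unitary_mat U n"
  shows "unitary_mat (W * U) n"
proof -
  note Wc = unitary_matD(1)[OF W] and Uc = unitary_matD(1)[OF U]
  have "mat_adjoint (W * U) * (W * U) = mat_adjoint U * ((mat_adjoint W * W) * U)"
    using Wc Uc by (simp add: mat_adjoint_mult assoc_mult_mat[of _ n n _ n _ n])
  also have "\<dots> = 1\<^sub>m n" using unitary_matD[OF W] unitary_matD[OF U] by simp
  finally show ?thesis using Wc Uc unfolding unitary_mat_def by auto
qed

lemma col_unitary_mat:
  assumes U: "unitary_mat U n" and i: "i < n"
  shows "col U i \<in> carrier_vec n" "col U i \<bullet>c col U i = 1" "col U i \<noteq> 0\<^sub>v n"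
proof -
  show c: "col U i \<in> carrier_vec n" using unitary_matD(1)[OF U] i by auto
  show u: "col U i \<bullet>c col U i = 1"
    using index_mat_adjoint_mult_self[OF unitary_matD(1)[OF U] i i] unitary_matD(2)[OF U] i by simp
  show "col U i \<noteq> 0\<^sub>v n" using c u by auto
qed

lemma mat_adjoint_mult_col_unitary:
  assumes U: "unitary_mat U n" and i: "i < n"
  shows "mat_adjoint U *\<^sub>v col U i = unit_vec n i"
proof -
  have "mat_adjoint U *\<^sub>v col U i = col (mat_adjoint U * U) i"
    by (rule col_mult2[symmetric, of _ n n _ n], insert unitary_matD(1)[OF U] i, auto)
  thus ?thesis using unitary_matD(2)[OF U] i by simp
qed

lemma diag_real_carrier[simp]: "diag_real n d \<in> carrier_mat n n"
  and dim_diag_real[simp]: "dim_row (diag_real n d) = n" "dim_col (diag_real n d) = n"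
  unfolding diag_real_def by auto

lemma index_diag_real[simp]:
  "i < n \<Longrightarrow> j < n \<Longrightarrow> diag_real n d $$ (i,j) = (if i = j then complex_of_real (d i) else 0)"
  unfolding diag_real_def by auto

lemma mat_adjoint_diag_real[simp]: "mat_adjoint (diag_real n d) = diag_real n d"
  by (rule eq_matI, auto)

lemma index_diag_real_mult_vec:
  assumes "w \<in> carrier_vec n" "i < n"
  shows "(diag_real n f *\<^sub>v w) $ i = complex_of_real (f i) * w $ i"
proof -
  have "(diag_real n f *\<^sub>v w) $ i = (\<Sum>j<n. (if i = j then complex_of_real (f i) else 0) * w $ j)"
    using assms by (auto simp: scalar_prod_def atLeast0LessThan intro!: sum.cong)
  also have "\<dots> = (\<Sum>j<n. if i = j then complex_of_real (f i) * w $ j else 0)"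
    by (rule sum.cong, auto)
  finally show ?thesis using assms by (simp add: sum.delta)
qed

abbreviation spectral_mat :: "complex mat \<Rightarrow> nat \<Rightarrow> (nat \<Rightarrow> real) \<Rightarrow> complex mat" where
  "spectral_mat U n d \<equiv> U * diag_real n d * mat_adjoint U"

lemma spectral_mat_carrier[simp]: "U \<in> carrier_mat n n \<Longrightarrow> spectral_mat U n d \<in> carrier_mat n n"
  by auto

lemma mat_adjoint_spectral_mat:
  assumes U: "U \<in> carrier_mat n n"
  shows "mat_adjoint (spectral_mat U n d) = spectral_mat U n d"
proof -
  have "mat_adjoint (spectral_mat U n d) = U * mat_adjoint (U * diag_real n d)"
    using U by (simp add: mat_adjoint_mult[of _ n n _ n])
  also have "\<dots> = U * (diag_real n d * mat_adjoint U)"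
    using U by (simp add: mat_adjoint_mult[of _ n n _ n])
  also have "\<dots> = spectral_mat U n d"
    using U by (simp add: assoc_mult_mat[of U n n "diag_real n d" n "mat_adjoint U" n])
  finally show ?thesis .
qed

lemma spectral_mat_mult_col:
  assumes U: "unitary_mat U n" and i: "i < n"
  shows "spectral_mat U n d *\<^sub>v col U i = complex_of_real (d i) \<cdot>\<^sub>v col U i"
proof -
  note Uc = unitary_matD(1)[OF U] and ci = col_unitary_mat(1)[OF U i]
  have diag: "diag_real n d *\<^sub>v unit_vec n i = complex_of_real (d i) \<cdot>\<^sub>v unit_vec n i"
    by (rule eq_vecI, insert i, auto simp: index_diag_real_mult_vec)
  have "U *\<^sub>v unit_vec n i = col U i"
    using col_mult2[of U n n "1\<^sub>m n" n i] Uc i by simp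
  moreover have "spectral_mat U n d *\<^sub>v col U i = U *\<^sub>v (diag_real n d *\<^sub>v unit_vec n i)"
    using Uc ci mat_adjoint_mult_col_unitary[OF U i]
    by (simp add: assoc_mult_mat_vec[of _ n n _ n])
  ultimately show ?thesis unfolding diag using Uc by (simp add: mult_mat_vec[of _ n n])
qed

lemma eigenvalue_spectral_mat:
  assumes "unitary_mat U n" "i < n"
  shows "eigenvalue (spectral_mat U n d) (complex_of_real (d i))"
proof -
  have "dim_row (spectral_mat U n d) = n" using unitary_matD(1)[OF assms(1)] by simp
  hence "eigenvector (spectral_mat U n d) (col U i) (complex_of_real (d i))"
    using spectral_mat_mult_col[OF assms] col_unitary_mat[OF assms] unfolding eigenvector_def by simp
  thus ?thesis unfolding eigenvalue_def by blast
qed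

lemma quadratic_form_spectral_mat:
  assumes U: "U \<in> carrier_mat n n" and y: "y \<in> carrier_vec n"
  shows "(spectral_mat U n f *\<^sub>v y) \<bullet>c y
     = complex_of_real (\<Sum>i<n. f i * (cmod ((mat_adjoint U *\<^sub>v y) $ i))^2)"
proof -
  define w where "w = mat_adjoint U *\<^sub>v y"
  have w: "w \<in> carrier_vec n"
    unfolding w_def by (rule mult_mat_vec_carrier[OF mat_adjoint_carrier_mat[OF U] y])
  have "spectral_mat U n f *\<^sub>v y = (U * diag_real n f) *\<^sub>v w"
    unfolding w_def using U y by (intro assoc_mult_mat_vec[of _ n n _ n], auto)
  also have "\<dots> = U *\<^sub>v (diag_real n f *\<^sub>v w)"
    using U w by (intro assoc_mult_mat_vec[of _ n n _ n], auto)
  finally have "(spectral_mat U n f *\<^sub>v y) \<bullet>c y = (diag_real n f *\<^sub>v w) \<bullet>c w"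
    unfolding w_def using U y w[unfolded w_def]
    by (simp add: cscalar_prod_mat_adjoint[OF U mult_mat_vec_carrier[OF diag_real_carrier] y])
  also have "\<dots> = (\<Sum>i<n. (f i * w $ i) * cnj (w $ i))"
    using w by (auto simp: scalar_prod_def atLeast0LessThan index_diag_real_mult_vec
        simp del: index_mult_mat_vec intro!: sum.cong)
  also have "\<dots> = (\<Sum>i<n. complex_of_real (f i * (cmod (w $ i))^2))"
    by (rule sum.cong, auto simp: complex_mult_cnj cmod_def mult.assoc)
  finally show ?thesis unfolding w_def by simp
qed

lemma spectral_mat_add:
  assumes U: "U \<in> carrier_mat n n"
  shows "spectral_mat U n (\<lambda>i. f i + g i) = spectral_mat U n f + spectral_mat U n g"
proof -
  have "diag_real n (\<lambda>i. f i + g i) = diag_real n f + diag_real n g"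
    by (rule eq_matI, auto)
  thus ?thesis
    using mult_add_distrib_mat[OF U diag_real_carrier diag_real_carrier]
      add_mult_distrib_mat[OF mult_carrier_mat[OF U diag_real_carrier]
        mult_carrier_mat[OF U diag_real_carrier] mat_adjoint_carrier_mat[OF U]]
    by simp
qed

lemma spectral_mat_diff:
  assumes U: "U \<in> carrier_mat n n"
  shows "spectral_mat U n (\<lambda>i. f i - g i) = spectral_mat U n f - spectral_mat U n g"
proof -
  have "diag_real n (\<lambda>i. f i - g i) = diag_real n f - diag_real n g"
    by (rule eq_matI, auto)
  thus ?thesis
    using mult_minus_distrib_mat[OF U diag_real_carrier diag_real_carrier]
      minus_mult_distrib_mat[OF mult_carrier_mat[OF U diag_real_carrier]
        mult_carrier_mat[OF U diag_real_carrier] mat_adjoint_carrier_mat[OF U]]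
    by simp
qed

lemma spectral_mat_smult:
  assumes U: "U \<in> carrier_mat n n"
  shows "spectral_mat U n (\<lambda>i. c * f i) = complex_of_real c \<cdot>\<^sub>m spectral_mat U n f"
proof -
  have "diag_real n (\<lambda>i. c * f i) = complex_of_real c \<cdot>\<^sub>m diag_real n f"
    by (rule eq_matI, auto)
  thus ?thesis
    using mult_smult_distrib[OF U diag_real_carrier, where k = "complex_of_real c"]
      mult_smult_assoc_mat[OF mult_carrier_mat[OF U diag_real_carrier] mat_adjoint_carrier_mat[OF U]]
    by simp
qed

lemma spectral_mat_const:
  assumes U: "unitary_mat U n"
  shows "spectral_mat U n (\<lambda>_. c) = complex_of_real c \<cdot>\<^sub>m 1\<^sub>m n"
proof -
  have "diag_real n (\<lambda>_. c) = complex_of_real c \<cdot>\<^sub>m 1\<^sub>m n"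
    by (rule eq_matI, auto)
  thus ?thesis
    using mult_smult_distrib[OF unitary_matD(1)[OF U] one_carrier_mat, where k = "complex_of_real c"]
      mult_smult_assoc_mat[OF unitary_matD(1)[OF U] mat_adjoint_carrier_mat[OF unitary_matD(1)[OF U]]]
      unitary_matD[OF U]
    by simp
qed

lemma psd_mat_spectral_mat_iff:
  assumes U: "unitary_mat U n"
  shows "psd_mat (spectral_mat U n d) n \<longleftrightarrow> (\<forall>i<n. 0 \<le> d i)"
proof
  assume psd: "psd_mat (spectral_mat U n d) n"
  show "\<forall>i<n. 0 \<le> d i"
  proof (intro allI impI)
    fix i assume i: "i < n"
    have "(spectral_mat U n d *\<^sub>v col U i) \<bullet>c col U i = complex_of_real (d i)"
      using spectral_mat_mult_col[OF U i] col_unitary_mat[OF U i] by simp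
    thus "0 \<le> d i" using psd col_unitary_mat(1)[OF U i] unfolding psd_mat_def by force
  qed
next
  assume "\<forall>i<n. 0 \<le> d i"
  thus "psd_mat (spectral_mat U n d) n"
    using unitary_matD(1)[OF U]
    unfolding psd_mat_def hermitian_mat_def
    by (auto simp: mat_adjoint_spectral_mat quadratic_form_spectral_mat intro!: sum_nonneg)
qed

lemma posdef_imp_psd_mat:
  assumes A: "posdef_mat A n"
  shows "psd_mat A n"
  unfolding psd_mat_def
proof (intro conjI ballI)
  show "hermitian_mat A n" using A unfolding posdef_mat_def by simp
  fix v :: "complex vec" assume v: "v \<in> carrier_vec n"
  show "0 \<le> Re ((A *\<^sub>v v) \<bullet>c v)"
  proof (cases "v = 0\<^sub>v n")
    case True
    thus ?thesis using A unfolding posdef_mat_def hermitian_mat_def by auto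
  next
    case False
    thus ?thesis using A v unfolding posdef_mat_def by force
  qed
qed

lemma eigenvalue_posdef_pos:
  assumes A: "posdef_mat A n" and e: "eigenvalue A e"
  shows "0 < Re e"
proof -
  obtain v where v: "v \<in> carrier_vec n" "v \<noteq> 0\<^sub>v n" and Av: "A *\<^sub>v v = e \<cdot>\<^sub>v v"
    using e A unfolding eigenvalue_def eigenvector_def posdef_mat_def hermitian_mat_def by auto
  have "(A *\<^sub>v v) \<bullet>c v = e * complex_of_real (Re (v \<bullet>c v))"
    unfolding Av using v cscalar_prod_self_real(1)[OF v(1)] by simp
  hence "0 < Re e * Re (v \<bullet>c v)"
    using A v unfolding posdef_mat_def by force
  thus ?thesis using cscalar_prod_self_real(2)[OF v(1)] by (simp add: zero_less_mult_iff)
qed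

lemma psd_mat_add:
  assumes "psd_mat A n" "psd_mat B n"
  shows "psd_mat (A + B) n"
  using assms unfolding psd_mat_def hermitian_mat_def
  by (auto simp: mat_adjoint_add add_mult_distrib_mat_vec[of _ n n] add_scalar_prod_distrib[of _ n])

lemma loewner_ge_trans:
  assumes AB: "loewner_ge A B n" and BC: "loewner_ge B C n"
  shows "loewner_ge A C n"
proof -
  have "A - C = (A - B) + (B - C)"
    using AB BC unfolding loewner_ge_def by (intro eq_matI) auto
  thus ?thesis using AB BC psd_mat_add unfolding loewner_ge_def by metis
qed

lemma loewner_ge_spectral_mat_iff:
  assumes U: "unitary_mat U n"
  shows "loewner_ge (spectral_mat U n h) (spectral_mat U n g) n \<longleftrightarrow> (\<forall>i<n. g i \<le> h i)"
  using psd_mat_spectral_mat_iff[OF U, of "\<lambda>i. h i - g i"] unitary_matD(1)[OF U]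
  unfolding loewner_ge_def spectral_mat_diff[OF unitary_matD(1)[OF U]] by auto

lemma compression_carrier[simp]:
  "V \<in> carrier_mat n k \<Longrightarrow> A \<in> carrier_mat n n \<Longrightarrow> compression V A \<in> carrier_mat k k"
  unfolding compression_def by auto

lemma compression_add:
  assumes V: "V \<in> carrier_mat n k" and A: "A \<in> carrier_mat n n" and B: "B \<in> carrier_mat n n"
  shows "compression V (A + B) = compression V A + compression V B"
  unfolding compression_def
  using mult_add_distrib_mat[OF mat_adjoint_carrier_mat[OF V] A B]
    add_mult_distrib_mat[OF mult_carrier_mat[OF mat_adjoint_carrier_mat[OF V] A]
      mult_carrier_mat[OF mat_adjoint_carrier_mat[OF V] B] V]
  by simp

lemma compression_minus:
  assumes V: "V \<in> carrier_mat n k" and A: "A \<in> carrier_mat n n" and B: "B \<in> carrier_mat n n"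
  shows "compression V (A - B) = compression V A - compression V B"
  unfolding compression_def
  using mult_minus_distrib_mat[OF mat_adjoint_carrier_mat[OF V] A B]
    minus_mult_distrib_mat[OF mult_carrier_mat[OF mat_adjoint_carrier_mat[OF V] A]
      mult_carrier_mat[OF mat_adjoint_carrier_mat[OF V] B] V]
  by simp

lemma compression_smult:
  assumes V: "V \<in> carrier_mat n k" and A: "A \<in> carrier_mat n n"
  shows "compression V (c \<cdot>\<^sub>m A) = c \<cdot>\<^sub>m compression V A"
  unfolding compression_def
  using mult_smult_distrib[OF mat_adjoint_carrier_mat[OF V] A, where k = c]
    mult_smult_assoc_mat[OF mult_carrier_mat[OF mat_adjoint_carrier_mat[OF V] A] V]
  by simp

lemma compression_one:
  assumes "isometry_mat V n k"
  shows "compression V (1\<^sub>m n) = 1\<^sub>m k"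
  using assms unfolding isometry_mat_def compression_def by auto

lemma mat_adjoint_compression:
  assumes V: "V \<in> carrier_mat n k" and A: "A \<in> carrier_mat n n"
  shows "mat_adjoint (compression V A) = compression V (mat_adjoint A)"
proof -
  have "mat_adjoint (compression V A) = mat_adjoint V * mat_adjoint (mat_adjoint V * A)"
    unfolding compression_def by (rule mat_adjoint_mult[of _ k n _ k], insert V A, auto)
  also have "mat_adjoint (mat_adjoint V * A) = mat_adjoint A * V"
    by (subst mat_adjoint_mult[of _ k n _ n], insert V A, auto)
  also have "mat_adjoint V * (mat_adjoint A * V) = compression V (mat_adjoint A)"
    unfolding compression_def by (rule assoc_mult_mat[symmetric, of _ k n _ n _ k], insert V A, auto)
  finally show ?thesis .
qed

lemma quadratic_form_compression:
  assumes V: "V \<in> carrier_mat n k" and A: "A \<in> carrier_mat n n" and v: "v \<in> carrier_vec k"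
  shows "(compression V A *\<^sub>v v) \<bullet>c v = (A *\<^sub>v (V *\<^sub>v v)) \<bullet>c (V *\<^sub>v v)"
proof -
  have "compression V A *\<^sub>v v = (mat_adjoint V * A) *\<^sub>v (V *\<^sub>v v)"
    unfolding compression_def by (rule assoc_mult_mat_vec[of _ k n _ k], insert V A v, auto)
  also have "\<dots> = mat_adjoint V *\<^sub>v (A *\<^sub>v (V *\<^sub>v v))"
    by (rule assoc_mult_mat_vec[of _ k n _ n], insert V A v, auto)
  finally show ?thesis
    using cscalar_prod_mat_adjoint[OF mat_adjoint_carrier_mat[OF V]
        mult_mat_vec_carrier[OF A mult_mat_vec_carrier[OF V v]] v]
    by simp
qed

lemma psd_mat_compression:
  assumes A: "psd_mat A n" and V: "V \<in> carrier_mat n k"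
  shows "psd_mat (compression V A) k"
  using A V mult_mat_vec_carrier[OF V]
  unfolding psd_mat_def hermitian_mat_def
  by (auto simp: mat_adjoint_compression quadratic_form_compression)

lemma loewner_ge_compression:
  assumes "loewner_ge A B n" and "V \<in> carrier_mat n k"
  shows "loewner_ge (compression V A) (compression V B) k"
  using assms psd_mat_compression[of "A - B" n V k] compression_minus[of V n k A B]
  unfolding loewner_ge_def by auto

section \<open>The spectral theorem for Hermitian matrices\<close>

definition normalize_vec :: "complex vec \<Rightarrow> complex vec" where
  "normalize_vec v = complex_of_real (1 / sqrt (Re (v \<bullet>c v))) \<cdot>\<^sub>v v"

lemma normalize_vec_carrier[simp]: "v \<in> carrier_vec n \<Longrightarrow> normalize_vec v \<in> carrier_vec n"
  unfolding normalize_vec_def by auto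

lemma cscalar_prod_normalize_vec:
  assumes "v \<in> carrier_vec n" "w \<in> carrier_vec n"
  shows "normalize_vec v \<bullet>c normalize_vec w
    = complex_of_real (1 / sqrt (Re (v \<bullet>c v)) * (1 / sqrt (Re (w \<bullet>c w)))) * (v \<bullet>c w)"
  unfolding normalize_vec_def using assms by (simp add: conjugate_smult_vec)

lemma cscalar_prod_normalize_vec_self:
  assumes v: "v \<in> carrier_vec n" "v \<noteq> 0\<^sub>v n"
  shows "normalize_vec v \<bullet>c normalize_vec v = 1"
proof -
  define r where "r = Re (v \<bullet>c v)"
  have r: "0 < r" "v \<bullet>c v = complex_of_real r"
    unfolding r_def using cscalar_prod_self_real[OF v(1)] v(2) by auto
  have "sqrt r * sqrt r = r" using r(1) by simp
  thus ?thesis unfolding cscalar_prod_normalize_vec[OF v(1) v(1)] r_def[symmetric] r(2)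
    using r(1) by (simp add: field_simps flip: of_real_mult)
qed

lemma normalize_vec_unit: "v \<bullet>c v = 1 \<Longrightarrow> normalize_vec v = v"
  unfolding normalize_vec_def by simp

lemma unitary_mat_of_cols:
  assumes ws: "length ws = n" "set ws \<subseteq> carrier_vec n"
    and orth: "\<And>i j. i < n \<Longrightarrow> j < n \<Longrightarrow> ws ! i \<bullet>c ws ! j = (if i = j then 1 else 0)"
  shows "unitary_mat (mat_of_cols n ws) n"
proof -
  define W where "W = mat_of_cols n ws"
  have Wc: "W \<in> carrier_mat n n" unfolding W_def using ws by auto
  have colW: "\<And>j. j < n \<Longrightarrow> col W j = ws ! j" unfolding W_def
    by (rule col_mat_of_cols, insert ws, auto)
  have "mat_adjoint W * W = 1\<^sub>m n"
  proof (rule eq_matI)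
    fix i j assume "i < dim_row (1\<^sub>m n :: complex mat)" "j < dim_col (1\<^sub>m n :: complex mat)"
    hence i: "i < n" and j: "j < n" by auto
    show "(mat_adjoint W * W) $$ (i, j) = 1\<^sub>m n $$ (i, j)"
      unfolding index_mat_adjoint_mult_self[OF Wc i j] colW[OF i] colW[OF j] orth[OF j i]
      using i j by auto
  qed (insert Wc, auto)
  thus ?thesis using Wc unfolding unitary_mat_def W_def by auto
qed

lemma unitary_extension:
  assumes n: "0 < n" and u: "u \<in> carrier_vec n" and uu: "u \<bullet>c u = 1"
  shows "\<exists>W. unitary_mat W n \<and> col W 0 = u"
proof -
  interpret cof_vec_space n "TYPE(complex)" .
  have u0: "u \<noteq> 0\<^sub>v n" using uu u by auto
  define b where "b = basis_completion u"
  note bc = basis_completion[OF u u0, folded b_def]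
  define ws where "ws = gram_schmidt n b"
  note gs = gram_schmidt_result[OF bc(2) bc(4) bc(5) ws_def]
  have lws: "length ws = n" using gs bc by auto
  have wsc: "\<And>i. i < n \<Longrightarrow> ws ! i \<in> carrier_vec n" using gs(3) lws by auto
  have ws0: "\<And>i. i < n \<Longrightarrow> ws ! i \<noteq> 0\<^sub>v n"
    using corthogonalD[OF gs(2)] lws by fastforce
  have "b = u # tl b" using bc(6,7) n by (cases b, auto)
  hence "hd ws = u" unfolding ws_def using gram_schmidt_hd[OF u] by metis
  hence hws: "ws ! 0 = u" using lws n hd_conv_nth[of ws] by auto
  define ws' where "ws' = map normalize_vec ws"
  have orth: "ws' ! i \<bullet>c ws' ! j = (if i = j then 1 else 0)" if ij: "i < n" "j < n" for i j
  proof (cases "i = j")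
    case True
    thus ?thesis using cscalar_prod_normalize_vec_self[OF wsc ws0] ij lws unfolding ws'_def by simp
  next
    case False
    hence "ws ! i \<bullet>c ws ! j = 0" using corthogonalD[OF gs(2)] ij lws by simp
    thus ?thesis using cscalar_prod_normalize_vec[OF wsc wsc] ij lws False unfolding ws'_def by simp
  qed
  have "unitary_mat (mat_of_cols n ws') n"
    by (rule unitary_mat_of_cols, insert lws wsc orth, auto simp: ws'_def in_set_conv_nth)
  moreover have "col (mat_of_cols n ws') 0 = u"
    using col_mat_of_cols[of 0 ws' n] wsc lws n hws normalize_vec_unit[OF uu]
    unfolding ws'_def by auto
  ultimately show ?thesis by blast
qed

lemma hermitian_mat_index:
  "hermitian_mat A n \<Longrightarrow> i < n \<Longrightarrow> j < n \<Longrightarrow> A $$ (i, j) = cnj (A $$ (j, i))"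
  unfolding hermitian_mat_def by (metis carrier_matD index_mat_adjoint)

lemma hermitian_mat_compression:
  "hermitian_mat A n \<Longrightarrow> V \<in> carrier_mat n k \<Longrightarrow> hermitian_mat (compression V A) k"
  unfolding hermitian_mat_def by (simp add: mat_adjoint_compression)

lemma hermitian_deflation:
  assumes A: "hermitian_mat A (Suc m)" and W: "unitary_mat W (Suc m)"
    and eig: "A *\<^sub>v col W 0 = e \<cdot>\<^sub>v col W 0"
  shows "\<exists>r B. hermitian_mat B m \<and>
    compression W A = four_block_mat (diag_real 1 (\<lambda>_. r)) (0\<^sub>m 1 m) (0\<^sub>m m 1) B"
proof -
  define n where "n = Suc m"
  note Wc = unitary_matD(1)[OF W, folded n_def]
  have Ac: "A \<in> carrier_mat n n" using A unfolding hermitian_mat_def n_def by auto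
  define A' where "A' = compression W A"
  have hA': "hermitian_mat A' n" unfolding A'_def n_def by (rule hermitian_mat_compression[OF A Wc[unfolded n_def]])
  have "col A' 0 = (mat_adjoint W * A) *\<^sub>v col W 0"
    unfolding A'_def compression_def by (rule col_mult2[of _ n n _ n], insert Wc Ac, auto simp: n_def)
  also have "\<dots> = mat_adjoint W *\<^sub>v (A *\<^sub>v col W 0)"
    by (rule assoc_mult_mat_vec[of _ n n _ n], insert Wc Ac col_unitary_mat(1)[OF W zero_less_Suc], auto simp: n_def)
  also have "\<dots> = e \<cdot>\<^sub>v unit_vec n 0"
    unfolding eig using mult_mat_vec[OF mat_adjoint_carrier_mat[OF Wc] col_unitary_mat(1)[OF W, folded n_def]]
      mat_adjoint_mult_col_unitary[OF W] by (simp add: n_def)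
  finally have col0: "col A' 0 = e \<cdot>\<^sub>v unit_vec n 0" .
  have A'c: "A' \<in> carrier_mat n n" using hA' unfolding hermitian_mat_def by simp
  have A'i0: "A' $$ (i, 0) = (if i = 0 then e else 0)" if "i < n" for i
    using arg_cong[OF col0, of "\<lambda>v. v $ i"] A'c that by (simp add: n_def)
  have A'0j: "A' $$ (0, j) = (if j = 0 then e else 0)" if "j < n" for j
    using hermitian_mat_index[OF hA' _ that, of 0] A'i0[OF that] A'i0[of 0] by (auto simp: n_def)
  have e: "e = complex_of_real (Re e)"
    using hermitian_mat_index[OF hA', of 0 0] A'i0[of 0] by (simp add: n_def complex_eq_iff)
  define B where "B = mat m m (\<lambda>(i, j). A' $$ (Suc i, Suc j))"
  have "hermitian_mat B m"
    unfolding hermitian_mat_def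
    by (auto simp: B_def n_def intro!: eq_matI hermitian_mat_index[OF hA', symmetric])
  moreover have "A' = four_block_mat (diag_real 1 (\<lambda>_. Re e)) (0\<^sub>m 1 m) (0\<^sub>m m 1) B"
  proof (rule eq_matI)
    fix i j assume "i < dim_row (four_block_mat (diag_real 1 (\<lambda>_. Re e)) (0\<^sub>m 1 m) (0\<^sub>m m 1) B)"
      "j < dim_col (four_block_mat (diag_real 1 (\<lambda>_. Re e)) (0\<^sub>m 1 m) (0\<^sub>m m 1) B)"
    hence i: "i < n" and j: "j < n" by (auto simp: B_def n_def)
    show "A' $$ (i, j) = four_block_mat (diag_real 1 (\<lambda>_. Re e)) (0\<^sub>m 1 m) (0\<^sub>m m 1) B $$ (i, j)"
    proof (cases "i = 0 \<or> j = 0")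
      case True
      thus ?thesis using A'i0[OF i] A'0j[OF j] i j e by (auto simp: B_def n_def)
    next
      case False
      then obtain i' j' where "i = Suc i'" "j = Suc j'" using not0_implies_Suc by blast
      thus ?thesis using i j by (auto simp: B_def n_def)
    qed
  qed (use A'c in \<open>auto simp: B_def n_def\<close>)
  ultimately show ?thesis unfolding A'_def by blast
qed

lemma mat_adjoint_four_block_one:
  fixes U :: "complex mat"
  assumes "U \<in> carrier_mat m m"
  shows "mat_adjoint (four_block_mat (1\<^sub>m 1) (0\<^sub>m 1 m) (0\<^sub>m m 1) U)
    = four_block_mat (1\<^sub>m 1) (0\<^sub>m 1 m) (0\<^sub>m m 1) (mat_adjoint U)"
  by (rule eq_matI, insert assms, auto)

lemma unitary_mat_four_block_one:
  assumes U: "unitary_mat U m"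
  shows "unitary_mat (four_block_mat (1\<^sub>m 1) (0\<^sub>m 1 m) (0\<^sub>m m 1) U) (Suc m)"
proof -
  note Uc = unitary_matD(1)[OF U]
  have "mat_adjoint (four_block_mat (1\<^sub>m 1) (0\<^sub>m 1 m) (0\<^sub>m m 1) U) * four_block_mat (1\<^sub>m 1) (0\<^sub>m 1 m) (0\<^sub>m m 1) U
    = four_block_mat (1\<^sub>m 1) (0\<^sub>m 1 m) (0\<^sub>m m 1) (mat_adjoint U * U)"
    unfolding mat_adjoint_four_block_one[OF Uc]
    by (subst mult_four_block_mat[of _ 1 1 _ m _ m], insert Uc, auto)
  also have "\<dots> = 1\<^sub>m (Suc m)" using unitary_matD(2)[OF U] four_block_one_mat[of 1 m] by simp
  finally show ?thesis using Uc unfolding unitary_mat_def by auto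
qed

lemma spectral_mat_four_block_one:
  assumes U: "U \<in> carrier_mat m m"
  shows "four_block_mat (diag_real 1 (\<lambda>_. r)) (0\<^sub>m 1 m) (0\<^sub>m m 1) (spectral_mat U m d)
    = spectral_mat (four_block_mat (1\<^sub>m 1) (0\<^sub>m 1 m) (0\<^sub>m m 1) U) (Suc m)
        (\<lambda>i. if i = 0 then r else d (i - 1))"
proof -
  have "diag_real (Suc m) (\<lambda>i. if i = 0 then r else d (i - 1))
    = four_block_mat (diag_real 1 (\<lambda>_. r)) (0\<^sub>m 1 m) (0\<^sub>m m 1) (diag_real m d)"
    by (rule eq_matI, auto)
  thus ?thesis
    unfolding mat_adjoint_four_block_one[OF U]
    apply (simp only:)
    apply (subst mult_four_block_mat[of _ 1 1 _ m _ m], insert U, auto)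
    apply (subst mult_four_block_mat[of _ 1 1 _ m _ m], insert U, auto)
    done
qed

lemma spectral_mat_conj:
  assumes W: "W \<in> carrier_mat n n" and U: "U \<in> carrier_mat n n"
  shows "W * spectral_mat U n d * mat_adjoint W = spectral_mat (W * U) n d"
proof -
  have "spectral_mat (W * U) n d = W * U * diag_real n d * (mat_adjoint U * mat_adjoint W)"
    using W U by (simp add: mat_adjoint_mult[of W n n U n])
  thus ?thesis
    using W U by (simp add: assoc_mult_mat[of _ n n _ n _ n] mult_carrier_mat[of _ n n _ n])
qed

lemma unitary_mult_compression:
  assumes W: "unitary_mat W n" and A: "A \<in> carrier_mat n n"
  shows "W * compression W A * mat_adjoint W = A"
proof -
  note Wc = unitary_matD(1)[OF W]
  have "W * compression W A * mat_adjoint W = (W * mat_adjoint W) * A * (W * mat_adjoint W)"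
    unfolding compression_def using Wc A
    by (simp add: assoc_mult_mat[of _ n n _ n _ n] mult_carrier_mat[of _ n n _ n])
  thus ?thesis using unitary_matD(3)[OF W] A by simp
qed

theorem hermitian_spectral_decomposition:
  "hermitian_mat A n \<Longrightarrow> \<exists>U d. unitary_mat U n \<and> A = spectral_mat U n d"
proof (induction n arbitrary: A)
  case 0
  hence "A = spectral_mat (1\<^sub>m 0) 0 (\<lambda>_. 0)"
    unfolding hermitian_mat_def by (intro eq_matI) auto
  moreover have "unitary_mat (1\<^sub>m 0) 0" unfolding unitary_mat_def by auto
  ultimately show ?case by blast
next
  case (Suc m)
  have A: "A \<in> carrier_mat (Suc m) (Suc m)" using Suc.prems unfolding hermitian_mat_def by simp
  obtain e v where v: "v \<in> carrier_vec (Suc m)" "v \<noteq> 0\<^sub>v (Suc m)" and Av: "A *\<^sub>v v = e \<cdot>\<^sub>v v"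
    using spectrum_non_empty[OF A] A
    unfolding spectrum_def eigenvalue_def eigenvector_def by auto
  have "A *\<^sub>v normalize_vec v = e \<cdot>\<^sub>v normalize_vec v"
    unfolding normalize_vec_def using mult_mat_vec[OF A v(1)] Av
    by (simp add: smult_smult_assoc mult.commute)
  moreover obtain W where W: "unitary_mat W (Suc m)" and W0: "col W 0 = normalize_vec v"
    using unitary_extension[of "Suc m" "normalize_vec v"] cscalar_prod_normalize_vec_self[OF v] v(1)
    by auto
  ultimately obtain r B where B: "hermitian_mat B m"
    and deflate: "compression W A = four_block_mat (diag_real 1 (\<lambda>_. r)) (0\<^sub>m 1 m) (0\<^sub>m m 1) B"
    using hermitian_deflation[OF Suc.prems W] by metis
  obtain U d where U: "unitary_mat U m" and Bd: "B = spectral_mat U m d"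
    using Suc.IH[OF B] by blast
  define U' where "U' = four_block_mat (1\<^sub>m 1) (0\<^sub>m 1 m) (0\<^sub>m m 1) U"
  have U': "unitary_mat U' (Suc m)" unfolding U'_def by (rule unitary_mat_four_block_one[OF U])
  have "A = W * compression W A * mat_adjoint W" using unitary_mult_compression[OF W A] by simp
  also have "\<dots> = spectral_mat (W * U') (Suc m) (\<lambda>i. if i = 0 then r else d (i - 1))"
    unfolding deflate Bd spectral_mat_four_block_one[OF unitary_matD(1)[OF U]] U'_def[symmetric]
    by (rule spectral_mat_conj[OF unitary_matD(1)[OF W] unitary_matD(1)[OF U']])
  finally show ?case using unitary_mat_mult[OF W U'] by blast
qed

lemma mat_powr_spectral_mat:
  assumes A: "psd_mat A n"
  obtains U d where "unitary_mat U n" "A = spectral_mat U n d"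
    "mat_powr A p = spectral_mat U n (\<lambda>i. d i powr p)"
proof -
  have dim: "dim_row A = n" using A unfolding psd_mat_def hermitian_mat_def by auto
  obtain U d where U: "unitary_mat U n" and Ad: "A = spectral_mat U n d"
    using hermitian_spectral_decomposition A unfolding psd_mat_def by blast
  have "\<forall>i<n. 0 \<le> d i" using A psd_mat_spectral_mat_iff[OF U] unfolding Ad by blast
  hence "\<exists>B U d. unitary_mat U (dim_row A) \<and> (\<forall>i < dim_row A. 0 \<le> d i) \<and>
      A = spectral_mat U (dim_row A) d \<and> B = spectral_mat U (dim_row A) (\<lambda>i. d i powr p)"
    using U Ad unfolding dim by blast
  from someI_ex[OF this, folded mat_powr_def] that show thesis unfolding dim by blast
qed

section \<open>Chord bounds for powers between 1 and 2\<close>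

lemma powr_le_chord:
  fixes a b p y :: real
  assumes b: "0 < b" "b \<le> a" and p: "1 \<le> p" and y: "b \<le> y" "y \<le> a"
  shows "y powr p \<le> b powr p + (a powr p - b powr p) / (a - b) * (y - b)"
proof (cases "a = b")
  case True
  thus ?thesis using y by simp
next
  case False
  define t where "t = (y - b) / (a - b)"
  have t: "0 \<le> t" "t \<le> 1" unfolding t_def using b y False by auto
  have "t * (a - b) = y - b" unfolding t_def using False by simp
  hence "y = (1 - t) *\<^sub>R b + t *\<^sub>R a" by (simp add: algebra_simps)
  hence "y powr p \<le> (1 - t) * b powr p + t * a powr p"
    using convex_onD[OF powr_convex[OF p], of t b a] t b by simp
  also have "\<dots> = b powr p + t * (a powr p - b powr p)" by (simp add: algebra_simps)
  finally show ?thesis unfolding t_def by (simp add: mult.commute)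
qed

lemma two_point_moment_interpolation:
  fixes w1 w2 y1 y2 \<theta> :: real
  assumes w: "0 \<le> w1" "0 \<le> w2" "w1 + w2 = 1" and y: "0 < y1" "0 < y2"
    and \<theta>: "0 \<le> \<theta>" "\<theta> \<le> 1"
  shows "w1 * y1 powr (2 - \<theta>) + w2 * y2 powr (2 - \<theta>)
    \<le> (w1 * y1 + w2 * y2) powr \<theta> * (w1 * y1^2 + w2 * y2^2) powr (1 - \<theta>)"
proof -
  define X where "X = w1 * y1 + w2 * y2"
  define Q where "Q = w1 * y1^2 + w2 * y2^2"
  have pos: "0 < w1 * z1 + w2 * z2" if "0 < z1" "0 < z2" for z1 z2 :: real
    using w that by (cases "w1 = 0") (auto intro: add_pos_nonneg)
  have X: "0 < X" and Q: "0 < Q" unfolding X_def Q_def using pos y by simp_all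
  define M where "M = X powr \<theta> * Q powr (1 - \<theta>)"
  have M: "0 < M" unfolding M_def using X Q by simp
  (* Young's inequality for y^(2-theta) = M (y/X)^theta (y^2/Q)^(1-theta); the weighted sum
     of the resulting bounds is exactly M. *)
  have young: "y powr (2 - \<theta>) \<le> M * (\<theta> * (y / X) + (1 - \<theta>) * (y^2 / Q))" if "0 < y" for y
  proof -
    have "y^2 = y powr 2" using that by (simp add: powr_numeral)
    hence "(y^2 / Q) powr (1 - \<theta>) = y powr (2 * (1 - \<theta>)) / Q powr (1 - \<theta>)"
      by (simp add: powr_divide powr_powr)
    moreover have "y powr \<theta> * y powr (2 * (1 - \<theta>)) = y powr (2 - \<theta>)"
      by (simp add: powr_add[symmetric])
    ultimately have "y powr (2 - \<theta>) = M * ((y / X) powr \<theta> * (y^2 / Q) powr (1 - \<theta>))"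
      unfolding M_def using X Q by (simp add: powr_divide field_simps)
    also have "\<dots> \<le> M * (\<theta> * (y / X) + (1 - \<theta>) * (y^2 / Q))"
      by (rule mult_left_mono[OF Youngs_inequality_0], insert \<theta> that X Q M, auto)
    finally show ?thesis .
  qed
  have "w1 * y1 powr (2 - \<theta>) + w2 * y2 powr (2 - \<theta>) \<le>
     w1 * (M * (\<theta> * (y1 / X) + (1 - \<theta>) * (y1^2 / Q)))
     + w2 * (M * (\<theta> * (y2 / X) + (1 - \<theta>) * (y2^2 / Q)))"
    by (intro add_mono mult_left_mono young, insert w y, auto)
  also have "\<dots> = M * (\<theta> * ((w1 * y1 + w2 * y2) / X) + (1 - \<theta>) * ((w1 * y1^2 + w2 * y2^2) / Q))"
    using X Q by (simp add: field_simps)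
  also have "\<dots> = M" using X Q unfolding X_def[symmetric] Q_def[symmetric] by simp
  finally show ?thesis unfolding M_def X_def Q_def .
qed

lemma scaled_chord_le_powr:
  fixes a b p x :: real
  assumes b: "0 < b" "b \<le> a" and p: "1 \<le> p" "p \<le> 2" and x: "b \<le> x" "x \<le> a"
  shows "4 * a * b / (a + b)^2 * (b powr p + (a powr p - b powr p) / (a - b) * (x - b)) \<le> x powr p"
proof (cases "a = b")
  case True
  hence "4 * a * b / (a + b)^2 = 1" using b by (simp add: power2_eq_square)
  thus ?thesis using True x by simp
next
  case False
  define t where "t = (x - b) / (a - b)"
  define \<theta> where "\<theta> = 2 - p"
  define L where "L = b powr p + (a powr p - b powr p) / (a - b) * (x - b)"
  define Q where "Q = (1 - t) * b^2 + t * a^2"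
  define K where "K = (a + b)^2 / (4 * a * b)"
  have t: "0 \<le> t" "t \<le> 1" unfolding t_def using b x False by auto
  have \<theta>: "0 \<le> \<theta>" "\<theta> \<le> 1" "p = 2 - \<theta>" unfolding \<theta>_def using p by auto
  have "t * (a - b) = x - b" unfolding t_def using False by simp
  hence xt: "x = (1 - t) * b + t * a" by (simp add: algebra_simps)
  have "(1 - t) * b powr p + t * a powr p = b powr p + t * (a powr p - b powr p)"
    by (simp add: algebra_simps)
  hence L: "L = (1 - t) * b powr p + t * a powr p" unfolding L_def t_def by simp
  have x0: "0 < x" using b x by simp
  have "b^2 \<le> a^2" using b by (intro power_mono) auto
  hence "0 \<le> t * (a^2 - b^2)" using t by simp
  moreover have "Q = b^2 + t * (a^2 - b^2)" unfolding Q_def by (simp add: algebra_simps)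
  ultimately have Q0: "0 < Q" using b by (simp add: add_pos_nonneg)
  have "4 * a * b \<le> (a + b)^2"
    using zero_le_power2[of "a - b"] by (simp add: power2_eq_square algebra_simps)
  hence K1: "1 \<le> K" unfolding K_def using b by simp
  (* Q = (a + b) x - a b, and Q / x^2 is maximal at x = 2ab/(a+b). *)
  have QK: "Q \<le> K * x^2"
  proof -
    have Qx: "Q = (a + b) * x - a * b" unfolding Q_def xt by (simp add: algebra_simps power2_eq_square)
    have "K * x^2 - Q = ((a + b) * x - 2 * a * b)^2 / (4 * a * b)"
      unfolding Qx K_def using b by (simp add: field_simps power2_eq_square)
    thus ?thesis using b by (smt (verit) divide_nonneg_pos zero_le_power2 mult_pos_pos)
  qed
  have "L \<le> x powr \<theta> * Q powr (1 - \<theta>)"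
    unfolding L \<theta>(3) xt Q_def by (rule two_point_moment_interpolation, insert t b \<theta>, auto)
  also have "\<dots> \<le> x powr \<theta> * (K powr (1 - \<theta>) * (x^2) powr (1 - \<theta>))"
  proof (rule mult_left_mono)
    have "Q powr (1 - \<theta>) \<le> (K * x^2) powr (1 - \<theta>)"
      using powr_mono2[OF _ less_imp_le[OF Q0] QK, of "1 - \<theta>"] \<theta>(2) by simp
    thus "Q powr (1 - \<theta>) \<le> K powr (1 - \<theta>) * (x^2) powr (1 - \<theta>)"
      by (simp only: powr_mult)
  qed (rule powr_ge_zero)
  also have "x powr \<theta> * (K powr (1 - \<theta>) * (x^2) powr (1 - \<theta>)) = K powr (1 - \<theta>) * x powr p"
  proof -
    have "x^2 = x powr 2" using x0 by (simp add: powr_numeral)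
    hence "(x^2) powr (1 - \<theta>) = x powr (2 * (1 - \<theta>))" by (simp add: powr_powr)
    moreover have "x powr \<theta> * x powr (2 * (1 - \<theta>)) = x powr p"
      unfolding \<theta>(3) by (simp add: powr_add[symmetric])
    ultimately show ?thesis by (simp add: mult_ac)
  qed
  also have "\<dots> \<le> K * x powr p"
    using powr_mono[of "1 - \<theta>" 1 K] \<theta> K1 by (intro mult_right_mono) auto
  finally have "L \<le> K * x powr p" .
  hence "L / K \<le> x powr p" using K1 by (simp add: divide_le_eq mult.commute)
  moreover have "4 * a * b / (a + b)^2 * L = L / K" unfolding K_def by simp
  ultimately show ?thesis unfolding L_def by simp
qed

section \<open>Compressions of functions of a Hermitian matrix\<close>

lemma compression_spectral_mat_const:
  assumes U: "unitary_mat U n" and W: "unitary_mat W k" and V: "isometry_mat V n k"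
  shows "compression V (spectral_mat U n (\<lambda>_. c)) = spectral_mat W k (\<lambda>_. c)"
proof -
  have Vc: "V \<in> carrier_mat n k" using V unfolding isometry_mat_def by simp
  show ?thesis unfolding spectral_mat_const[OF U] spectral_mat_const[OF W]
    by (simp add: compression_smult[OF Vc one_carrier_mat] compression_one[OF V])
qed

lemma compression_spectral_mat_bounds:
  assumes U: "unitary_mat U n" and W: "unitary_mat W k" and V: "isometry_mat V n k"
    and X: "compression V (spectral_mat U n d) = spectral_mat W k e"
    and d: "\<forall>i<n. b \<le> d i \<and> d i \<le> a"
  shows "\<forall>i<k. b \<le> e i \<and> e i \<le> a"
proof -
  have Vc: "V \<in> carrier_mat n k" using V unfolding isometry_mat_def by simp
  have "loewner_ge (spectral_mat U n d) (spectral_mat U n (\<lambda>_. b)) n"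
    "loewner_ge (spectral_mat U n (\<lambda>_. a)) (spectral_mat U n d) n"
    using d unfolding loewner_ge_spectral_mat_iff[OF U] by auto
  from this[THEN loewner_ge_compression[OF _ Vc]]
  have "loewner_ge (spectral_mat W k e) (spectral_mat W k (\<lambda>_. b)) k"
    "loewner_ge (spectral_mat W k (\<lambda>_. a)) (spectral_mat W k e) k"
    unfolding X compression_spectral_mat_const[OF U W V] .
  thus ?thesis unfolding loewner_ge_spectral_mat_iff[OF W] by auto
qed

lemma loewner_ge_compression_spectral_mat:
  fixes \<phi> :: "real \<Rightarrow> real"
  assumes U: "unitary_mat U n" and W: "unitary_mat W k" and V: "isometry_mat V n k"
    and X: "compression V (spectral_mat U n d) = spectral_mat W k e"
    and c: "0 \<le> c"
    and upper: "\<forall>i<n. \<phi> (d i) \<le> \<alpha> + \<beta> * d i"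
    and lower: "\<forall>i<k. c * (\<alpha> + \<beta> * e i) \<le> \<phi> (e i)"
  shows "loewner_ge (spectral_mat W k (\<lambda>i. \<phi> (e i)))
    (complex_of_real c \<cdot>\<^sub>m compression V (spectral_mat U n (\<lambda>i. \<phi> (d i)))) k"
proof -
  note Uc = unitary_matD(1)[OF U] and Wc = unitary_matD(1)[OF W]
  have Vc: "V \<in> carrier_mat n k" using V unfolding isometry_mat_def by simp
  have affine: "compression V (spectral_mat U n (\<lambda>i. c * \<alpha> + c * \<beta> * d i))
    = spectral_mat W k (\<lambda>i. c * \<alpha> + c * \<beta> * e i)"
    using Uc Wc Vc
    by (simp add: spectral_mat_add spectral_mat_smult[where c = "c * \<beta>"] compression_add
        compression_smult compression_spectral_mat_const[OF U W V] X)
  have "loewner_ge (spectral_mat W k (\<lambda>i. \<phi> (e i))) (spectral_mat W k (\<lambda>i. c * \<alpha> + c * \<beta> * e i)) k"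
    using lower unfolding loewner_ge_spectral_mat_iff[OF W] by (simp add: algebra_simps)
  moreover have "loewner_ge (spectral_mat U n (\<lambda>i. c * \<alpha> + c * \<beta> * d i))
    (spectral_mat U n (\<lambda>i. c * \<phi> (d i))) n"
    unfolding loewner_ge_spectral_mat_iff[OF U]
  proof (intro allI impI)
    fix i assume "i < n"
    hence "c * \<phi> (d i) \<le> c * (\<alpha> + \<beta> * d i)" using upper mult_left_mono[OF _ c] by blast
    thus "c * \<phi> (d i) \<le> c * \<alpha> + c * \<beta> * d i" by (simp add: algebra_simps)
  qed
  hence "loewner_ge (compression V (spectral_mat U n (\<lambda>i. c * \<alpha> + c * \<beta> * d i)))
    (compression V (spectral_mat U n (\<lambda>i. c * \<phi> (d i)))) k"
    by (rule loewner_ge_compression[OF _ Vc])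
  hence "loewner_ge (spectral_mat W k (\<lambda>i. c * \<alpha> + c * \<beta> * e i))
    (complex_of_real c \<cdot>\<^sub>m compression V (spectral_mat U n (\<lambda>i. \<phi> (d i)))) k"
    unfolding affine spectral_mat_smult[OF Uc] compression_smult[OF Vc spectral_mat_carrier[OF Uc]] .
  ultimately show ?thesis by (rule loewner_ge_trans)
qed

theorem proposition1p11:
  fixes Z :: "complex mat" and n :: nat and a b p :: real
  assumes Z: "posdef_mat Z n"
    and a_eig: "eigenvalue Z (complex_of_real a)"
    and a_max: "\<forall>\<mu>. eigenvalue Z \<mu> \<longrightarrow> Re \<mu> \<le> a"
    and b_eig: "eigenvalue Z (complex_of_real b)"
    and b_min: "\<forall>\<mu>. eigenvalue Z \<mu> \<longrightarrow> b \<le> Re \<mu>"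
    and p: "1 \<le> p" "p \<le> 2"
  shows "\<forall>k V. isometry_mat V n k \<longrightarrow>
     loewner_ge (mat_powr (compression V Z) p)
                (complex_of_real (4 * a * b / (a + b)^2) \<cdot>\<^sub>m compression V (mat_powr Z p)) k"
proof (intro allI impI)
  fix k V assume V: "isometry_mat V n k"
  have Z_psd: "psd_mat Z n" by (rule posdef_imp_psd_mat[OF Z])
  have b: "0 < b" "b \<le> a"
    using eigenvalue_posdef_pos[OF Z b_eig] a_max b_eig by auto
  obtain U d where U: "unitary_mat U n" and Zd: "Z = spectral_mat U n d"
    and Zp: "mat_powr Z p = spectral_mat U n (\<lambda>i. d i powr p)"
    using mat_powr_spectral_mat[OF Z_psd] by blast
  have d: "\<forall>i<n. b \<le> d i \<and> d i \<le> a"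
    using eigenvalue_spectral_mat[OF U] a_max b_min unfolding Zd by force
  obtain W e where W: "unitary_mat W k" and Xe: "compression V Z = spectral_mat W k e"
    and Xp: "mat_powr (compression V Z) p = spectral_mat W k (\<lambda>i. e i powr p)"
    using mat_powr_spectral_mat[OF psd_mat_compression[OF Z_psd]] V unfolding isometry_mat_def by blast
  have e: "\<forall>i<k. b \<le> e i \<and> e i \<le> a"
    using compression_spectral_mat_bounds[OF U W V Xe[unfolded Zd] d] .
  (* for a = b this is 0/0 = 0, and the chord degenerates to the constant b^p *)
  define \<beta> where "\<beta> = (a powr p - b powr p) / (a - b)"
  have chord: "b powr p - \<beta> * b + \<beta> * t = b powr p + \<beta> * (t - b)" for t
    by (simp add: algebra_simps)
  show "loewner_ge (mat_powr (compression V Z) p)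
    (complex_of_real (4 * a * b / (a + b)^2) \<cdot>\<^sub>m compression V (mat_powr Z p)) k"
    unfolding Xp Zp
  proof (rule loewner_ge_compression_spectral_mat[OF U W V Xe[unfolded Zd]])
    show "\<forall>i<n. d i powr p \<le> (b powr p - \<beta> * b) + \<beta> * d i"
      unfolding chord using powr_le_chord[OF b p(1), folded \<beta>_def] d by blast
    show "\<forall>i<k. 4 * a * b / (a + b)^2 * ((b powr p - \<beta> * b) + \<beta> * e i) \<le> e i powr p"
      unfolding chord using scaled_chord_le_powr[OF b p, folded \<beta>_def] e by blast
  qed (use b in simp)
qed

end
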